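(* Fix $m\le n$. There is a unique bijection $\phi_m$ between the set of complete $m$-chains of $\Pi(n)$ and the set of ordered $(m,n)$-forests that sends a chain $C$ with top element $P$ and Jordan-Hölder permutation $\lambda$ to an ordered forest with priority forest $P$ and priority traversal $\lambda^{-1}$. The bijection $\phi_m$ is explicitly defined as $\phi_m(C) = \lambda^{-1}(P)$.
   Context: An ordered $(m,n)$-forest is a rooted forest with $n+1$ nodes and $m$ edges whose component trees $T_0,\dots,T_{n-m}$ are totally ordered, with roots marked $\circ,\circ_1,\dots,\circ_{n-m}$ recording the order, and whose $m$ non-root vertices are labeled by $[m]=\{1,\dots,m\}$. The priority-first search on an ordered forest starts with only the children of $\circ$ unblocked; at each step it visits the unblocked node with smallest label and unblocks its children; when a component tree is exhausted it moves to the next tree, reads its root and unblocks the root's children. The priority traversal of the forest is the resulting sequence of visited nodes (the initial root $\circ$ is not recorded, and the other roots are recorded as $-$), a partial permutation. The priority forest of an ordered forest is obtained by relabeling its nodes in the order they are visited by priority search, with $\circ$ labeled $0$. In general, a priority forest labeled with $\{0,1,\dots,n\}$ is a rooted forest $(T_0,\dots,T_{n-m})$ whose component trees are increasing and ordered by root labels, such that for $j<k$ every label of $T_j$ is smaller than every label of $T_k$. The priority lattice $\Pi(n)$ consists of all priority forests labeled with $\{0,1,\dots,n\}$ together with an extra top element $\hat 1$, ordered by inclusion of edge sets for priority forests; its bottom element $\hat 0$ is the edgeless forest. For a cover relation $P'\lessdot P$ between priority forests, the edge label $\lambda(P',P)$ is the larger endpoint of the unique edge in $E(P)\setminus E(P')$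 (covers involving $\hat 1$ are unlabeled). A complete $m$-chain is a saturated chain $C:\hat 0=P_0\lessdot P_1\lessdot\cdots\lessdot P_m=P$ of length $m$ starting at $\hat 0$; its Jordan-Hölder permutation is $\lambda(C)=(\lambda(P_0,P_1),\dots,\lambda(P_{m-1},P_m))$, a partial permutation. For such $C$ with top element $P$, $\lambda^{-1}(P)$ denotes the ordered forest obtained by relabeling the non-root vertices of $P$ according to the partial permutation $\lambda(C)^{-1}$ and recording the relative order of the roots in the subscripts of the $\circ$'s. *)

theory Defs
  imports Main
begin

text \<open>Vertices of an ordered forest: roots Rt 0 (the root written o), Rt j (the root o_j),
  and non-root vertices Lb i with labels i in {1..m}.\<close>
datatype overt = Rt nat | Lb nat

text \<open>An ordered forest is given by its parent map on the labels {1..m}.\<close>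
type_synonym oforest = "nat \<Rightarrow> overt option"

definition ordered_forests :: "nat \<Rightarrow> nat \<Rightarrow> oforest set" where
  "ordered_forests m n =
     {F. dom F = {1..m}
       \<and> ran F \<subseteq> Rt ` {0..n - m} \<union> Lb ` {1..m}
       \<and> acyclic {(Lb i, v) | i v. F i = Some v}}"

definition ochildren :: "oforest \<Rightarrow> overt \<Rightarrow> nat set" where
  "ochildren F v = {i. F i = Some v}"

text \<open>Arguments: forest, number r of extra roots, fuel,
  index j of the current tree, set U of unblocked labels. Output: the traversal,
  with Some i for a visited label i and None for a visited root (written -).\<close>
fun ptrav_aux :: "oforest \<Rightarrow> nat \<Rightarrow> nat \<Rightarrow> nat \<Rightarrow> nat set \<Rightarrow> nat option list" where
  "ptrav_aux F r 0 j U = []"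
| "ptrav_aux F r (Suc k) j U =
     (if U \<noteq> {} then
        Some (Min U) # ptrav_aux F r k j (U - {Min U} \<union> ochildren F (Lb (Min U)))
      else if j < r then
        None # ptrav_aux F r k (Suc j) (ochildren F (Rt (Suc j)))
      else [])"

definition priority_traversal :: "nat \<Rightarrow> nat \<Rightarrow> oforest \<Rightarrow> nat option list" where
  "priority_traversal m n F = ptrav_aux F (n - m) n 0 (ochildren F (Rt 0))"

text \<open>Position (new label) of a vertex in the order of visit; the root o gets 0.\<close>
definition visit_pos :: "nat option list \<Rightarrow> overt \<Rightarrow> nat" where
  "visit_pos t v = (case v of
      Lb i \<Rightarrow> Suc (THE k. k < length t \<and> t ! k = Some i)
    | Rt j \<Rightarrow> (if j = 0 then 0 else
        Suc (THE k. k < length t \<and> t ! k = None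
                  \<and> length (filter (\<lambda>x. x = None) (take (Suc k) t)) = j)))"

text \<open>Priority forest of an ordered forest, as a set of edges (parent, child) on {0..n}.\<close>
definition priority_forest_of :: "nat \<Rightarrow> nat \<Rightarrow> oforest \<Rightarrow> (nat \<times> nat) set" where
  "priority_forest_of m n F =
     (let t = priority_traversal m n F
      in {(visit_pos t v, visit_pos t (Lb i)) | i v. F i = Some v})"

definition pf_root :: "(nat \<times> nat) set \<Rightarrow> nat \<Rightarrow> bool" where
  "pf_root E r \<longleftrightarrow> \<not> (\<exists>a. (a, r) \<in> E)"

definition priority_forest :: "nat \<Rightarrow> (nat \<times> nat) set \<Rightarrow> bool" where
  "priority_forest n E \<longleftrightarrow>
     E \<subseteq> {0..n} \<times> {0..n}
   \<and> (\<forall>(a, b) \<in> E. a < b)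
   \<and> (\<forall>a a' b. (a, b) \<in> E \<longrightarrow> (a', b) \<in> E \<longrightarrow> a = a')
   \<and> (\<forall>x \<in> {0..n}. \<forall>y \<in> {0..n}. \<forall>rx \<in> {0..n}. \<forall>ry \<in> {0..n}.
        pf_root E rx \<and> (rx, x) \<in> E\<^sup>* \<and> pf_root E ry \<and> (ry, y) \<in> E\<^sup>* \<and> rx < ry
        \<longrightarrow> x < y)"

text \<open>Cover relation between priority forests in Pi(n) (the top element 1 is never
  strictly between two priority forests, so it may be ignored here).\<close>
definition pf_cover :: "nat \<Rightarrow> (nat \<times> nat) set \<Rightarrow> (nat \<times> nat) set \<Rightarrow> bool" where
  "pf_cover n P' P \<longleftrightarrow> priority_forest n P' \<and> priority_forest n P \<and> P' \<subset> P
     \<and> \<not> (\<exists>Q. priority_forest n Q \<and> P' \<subset> Q \<and> Q \<subset> P)"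

definition edge_label :: "(nat \<times> nat) set \<Rightarrow> (nat \<times> nat) set \<Rightarrow> nat" where
  "edge_label P' P = snd (the_elem (P - P'))"

definition complete_chains :: "nat \<Rightarrow> nat \<Rightarrow> (nat \<times> nat) set list set" where
  "complete_chains n m =
     {C. length C = Suc m \<and> C ! 0 = {} \<and> (\<forall>P \<in> set C. priority_forest n P)
       \<and> (\<forall>i < m. pf_cover n (C ! i) (C ! Suc i))}"

definition jh_perm :: "(nat \<times> nat) set list \<Rightarrow> nat list" where
  "jh_perm C = map (\<lambda>i. edge_label (C ! i) (C ! Suc i)) [0..<length C - 1]"

text \<open>Inverse of a partial permutation lam = (lam_1,...,lam_m) (injective word over [n]),
  as a word of length n over [m] plus None (for -).\<close>
definition inv_pperm :: "nat \<Rightarrow> nat list \<Rightarrow> nat option list" where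
  "inv_pperm n lam =
     map (\<lambda>k. if k \<in> set lam then Some (Suc (THE i. i < length lam \<and> lam ! i = k)) else None)
         [1..<Suc n]"

text \<open>Relabel vertex v of P according to the word w = lam^{-1}: non-roots get labels,
  0 becomes the root o, other roots become o_j by relative order.\<close>
definition relabel_vertex :: "nat option list \<Rightarrow> nat \<Rightarrow> overt" where
  "relabel_vertex w v = (if v = 0 then Rt 0 else
      (case w ! (v - 1) of
         Some i \<Rightarrow> Lb i
       | None \<Rightarrow> Rt (length (filter (\<lambda>x. x = None) (take v w)))))"

definition phi_chain :: "nat \<Rightarrow> (nat \<times> nat) set list \<Rightarrow> oforest" where
  "phi_chain n C =
     (let P = last C; lam = jh_perm C; w = inv_pperm n lam
      in (\<lambda>i. if i \<in> {1..length lam}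
               then Some (relabel_vertex w (THE p. (p, lam ! (i - 1)) \<in> P))
               else None))"

end

(*
  A priority forest is characterised locally: every vertex strictly above the parent and at
  most the child of an edge has a parent itself. Hence a cover in Pi(n) adds exactly one edge,
  and a complete chain is determined by its top element P and its Jordan-Hoelder word lam.

  The priority traversal of an ordered forest F is the unique word in which every step visits
  the smallest unblocked label, or the next root when no label is unblocked. For a chain C, the
  word lam^-1 has this property for the forest lam^-1(P): every vertex between the two ends of
  the k-th edge added by C already has a parent in C_k, so it is an earlier, smaller entry of
  lam. Thus phi(C) has priority forest P and priority traversal lam^-1, which makes phi
  injective and forces every map with these two properties to be phi.

  Conversely, relabelling F by its priority traversal and adding its edges in the order of
  their labels in F gives a complete chain that phi maps back to F.
*)
theory Submission
  imports Defs
begin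

section \<open>Priority forests as a local condition\<close>

definition local_priority_forest :: "nat \<Rightarrow> (nat \<times> nat) set \<Rightarrow> bool" where
  "local_priority_forest n E \<longleftrightarrow>
     E \<subseteq> {0..n} \<times> {0..n}
   \<and> (\<forall>(a, b) \<in> E. a < b)
   \<and> (\<forall>a a' b. (a, b) \<in> E \<longrightarrow> (a', b) \<in> E \<longrightarrow> a = a')
   \<and> (\<forall>a b x. (a, b) \<in> E \<longrightarrow> a < x \<longrightarrow> x \<le> b \<longrightarrow> (\<exists>c. (c, x) \<in> E))"

lemma local_priority_forest_edge_le:
  "local_priority_forest n E \<Longrightarrow> (a, b) \<in> E \<Longrightarrow> a \<le> n \<and> b \<le> n"
  unfolding local_priority_forest_def by auto

lemma local_priority_forest_edge_less:
  "local_priority_forest n E \<Longrightarrow> (a, b) \<in> E \<Longrightarrow> a < b"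
  unfolding local_priority_forest_def by auto

lemma local_priority_forest_parent_unique:
  "local_priority_forest n E \<Longrightarrow> (a, b) \<in> E \<Longrightarrow> (a', b) \<in> E \<Longrightarrow> a = a'"
  unfolding local_priority_forest_def by blast

lemma local_priority_forest_has_parent:
  "local_priority_forest n E \<Longrightarrow> (a, b) \<in> E \<Longrightarrow> a < x \<Longrightarrow> x \<le> b \<Longrightarrow> \<exists>c. (c, x) \<in> E"
  unfolding local_priority_forest_def by blast

lemma rtrancl_increasing_le:
  assumes "\<forall>(a, b) \<in> E. a < b" and "(x, y) \<in> E\<^sup>*"
  shows "x \<le> (y::nat)"
  using assms(2) by induct (use assms(1) in auto)

lemma exists_root_rtrancl:
  assumes "\<forall>(a, b) \<in> E. a < b"
  shows "\<exists>r. pf_root E r \<and> (r, (x::nat)) \<in> E\<^sup>*"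
proof (induction x rule: less_induct)
  case (less x)
  show ?case
  proof (cases "pf_root E x")
    case False
    then obtain c where c: "(c, x) \<in> E" unfolding pf_root_def by auto
    with assms have "c < x" by auto
    with less obtain r where "pf_root E r" "(r, c) \<in> E\<^sup>*" by auto
    with c show ?thesis by (meson rtrancl.rtrancl_into_rtrancl)
  qed auto
qed

lemma rtrancl_has_parent_between:
  assumes "\<forall>a b x. (a, b) \<in> E \<longrightarrow> a < x \<longrightarrow> x \<le> b \<longrightarrow> (\<exists>c. (c, x) \<in> E)"
    and "(r, y) \<in> E\<^sup>*" and "r < z" and "z \<le> (y::nat)"
  shows "\<exists>c. (c, z) \<in> E"
  using assms(2-4)
proof (induction arbitrary: z)
  case (step y x)
  with assms(1) show ?case by (cases "z \<le> y") auto
qed auto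

lemma priority_forest_iff_local: "priority_forest n E \<longleftrightarrow> local_priority_forest n E"
proof
  assume pf: "priority_forest n E"
  then have sub: "E \<subseteq> {0..n} \<times> {0..n}" and inc: "\<forall>(a, b) \<in> E. a < b"
    unfolding priority_forest_def by auto
  have "\<exists>c. (c, x) \<in> E" if ab: "(a, b) \<in> E" "a < x" "x \<le> b" for a b x
  proof (rule ccontr)
    assume "\<nexists>c. (c, x) \<in> E"
    then have "pf_root E x" unfolding pf_root_def by auto
    moreover obtain r where r: "pf_root E r" "(r, a) \<in> E\<^sup>*"
      using exists_root_rtrancl[OF inc] by blast
    moreover have "(r, b) \<in> E\<^sup>*" using r(2) ab(1) by (meson rtrancl.rtrancl_into_rtrancl)
    moreover have "r \<le> a" using rtrancl_increasing_le[OF inc r(2)] .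
    ultimately have "b < x"
      using pf ab sub unfolding priority_forest_def by fastforce
    with ab show False by auto
  qed
  with pf show "local_priority_forest n E"
    unfolding priority_forest_def local_priority_forest_def by blast
next
  assume loc: "local_priority_forest n E"
  then have inc: "\<forall>(a, b) \<in> E. a < b"
    and between: "\<forall>a b x. (a, b) \<in> E \<longrightarrow> a < x \<longrightarrow> x \<le> b \<longrightarrow> (\<exists>c. (c, x) \<in> E)"
    unfolding local_priority_forest_def by auto
  have "x < y"
    if rx: "(rx, x) \<in> E\<^sup>*" and ry: "pf_root E ry" "(ry, y) \<in> E\<^sup>*" and "rx < ry"
    for x y rx ry
  proof (rule ccontr)
    assume "\<not> x < y"
    moreover have "ry \<le> y" using rtrancl_increasing_le[OF inc ry(2)] .
    ultimately obtain c where "(c, ry) \<in> E"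
      using rtrancl_has_parent_between[OF between rx \<open>rx < ry\<close>] by auto
    with ry(1) show False unfolding pf_root_def by auto
  qed
  with loc show "priority_forest n E"
    unfolding priority_forest_def local_priority_forest_def by blast
qed

text \<open>Adding to \<open>P'\<close> the edge of \<open>P - P'\<close> with the smallest child keeps the local condition,
  so a cover can only add one edge.\<close>
lemma pf_cover_insert:
  assumes "pf_cover n P' P"
  obtains e where "e \<notin> P'" and "P = insert e P'"
proof -
  have pf': "local_priority_forest n P'" and pf: "local_priority_forest n P" and "P' \<subset> P"
    and no_between: "\<nexists>Q. priority_forest n Q \<and> P' \<subset> Q \<and> Q \<subset> P"
    using assms unfolding pf_cover_def priority_forest_iff_local by auto
  then have "\<exists>b a. (a, b) \<in> P - P'" by auto
  define b where "b = (LEAST b. \<exists>a. (a, b) \<in> P - P')"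
  obtain a where ab: "(a, b) \<in> P - P'"
    using LeastI_ex[OF \<open>\<exists>b a. (a, b) \<in> P - P'\<close>] b_def by auto
  have b_least: "b \<le> b'" if "(a', b') \<in> P - P'" for a' b'
    unfolding b_def by (rule Least_le) (use that in auto)
  define Q where "Q = insert (a, b) P'"
  have QP: "Q \<subseteq> P" using ab \<open>P' \<subset> P\<close> unfolding Q_def by auto
  have has_parent: "\<exists>c. (c, z) \<in> Q" if xy: "(x, y) \<in> Q" "x < z" "z \<le> y" for x y z
  proof (cases "(x, y) \<in> P' \<or> z = y")
    case True
    with xy local_priority_forest_has_parent[OF pf'] show ?thesis
      unfolding Q_def by blast
  next
    case False
    then have "x = a" "z < b" using xy unfolding Q_def by auto
    then obtain c where c: "(c, z) \<in> P"
      using local_priority_forest_has_parent[OF pf] ab xy(2) by (meson DiffD1 less_imp_le)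
    have "(c, z) \<in> P'" using b_least[of c z] c \<open>z < b\<close> by fastforce
    then show ?thesis unfolding Q_def by auto
  qed
  have "local_priority_forest n Q"
    using QP pf has_parent unfolding local_priority_forest_def by blast
  then have "Q = P"
    using no_between QP ab unfolding Q_def priority_forest_iff_local by blast
  with ab that show ?thesis unfolding Q_def by auto
qed

lemma pf_coverI:
  assumes "priority_forest n P'" "priority_forest n P" "e \<notin> P'" "P = insert e P'"
  shows "pf_cover n P' P"
  unfolding pf_cover_def using assms by auto

section \<open>Complete chains and their Jordan-Hoelder permutations\<close>

lemma inv_pperm_length [simp]: "length (inv_pperm n lam) = n"
  unfolding inv_pperm_def by simp

context
  fixes n :: nat and lam :: "nat list"
  assumes distinct: "distinct lam" and range: "set lam \<subseteq> {1..n}"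
begin

lemma nth_inv_pperm_nth:
  assumes "k < length lam"
  shows "lam ! k - 1 < n \<and> inv_pperm n lam ! (lam ! k - 1) = Some (Suc k)"
proof -
  have "lam ! k \<in> {1..n}" using assms range nth_mem by blast
  moreover have "(THE i. i < length lam \<and> lam ! i = lam ! k) = k"
    using assms distinct by (auto simp: nth_eq_iff_index_eq)
  ultimately show ?thesis
    unfolding inv_pperm_def using assms by (auto simp del: upt_Suc)
qed

lemma nth_inv_pperm_Some:
  assumes "x < n" and "inv_pperm n lam ! x = Some i"
  shows "i \<in> {1..length lam} \<and> lam ! (i - 1) = Suc x"
proof -
  have "Suc x \<in> set lam"
    using assms unfolding inv_pperm_def by (auto simp del: upt_Suc split: if_splits)
  then obtain k where k: "k < length lam" "lam ! k = Suc x" by (auto simp: in_set_conv_nth)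
  then have "inv_pperm n lam ! x = Some (Suc k)" using nth_inv_pperm_nth[OF k(1)] by simp
  with assms k show ?thesis by auto
qed

end

lemma inv_pperm_inj:
  assumes "distinct lam" "set lam \<subseteq> {1..n}" "distinct lam'" "set lam' \<subseteq> {1..n}"
    and "length lam = length lam'" and "inv_pperm n lam = inv_pperm n lam'"
  shows "lam = lam'"
proof (rule nth_equalityI)
  fix k assume k: "k < length lam"
  then have "lam ! k - 1 < n" "inv_pperm n lam' ! (lam ! k - 1) = Some (Suc k)"
    using nth_inv_pperm_nth[OF assms(1,2)] assms(6) by auto
  then have "lam' ! k = Suc (lam ! k - 1)" using nth_inv_pperm_Some[OF assms(3,4)] by fastforce
  moreover have "lam ! k \<ge> 1" using k assms(2) nth_mem by fastforce
  ultimately show "lam ! k = lam' ! k" by simp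
qed (fact assms(5))

context
  fixes n m :: nat and C :: "(nat \<times> nat) set list"
  assumes chain: "C \<in> complete_chains n m"
begin

lemma length_chain: "length C = Suc m"
  and chain_nth_0: "C ! 0 = {}"
  and priority_forest_chain_nth: "k \<le> m \<Longrightarrow> priority_forest n (C ! k)"
  and pf_cover_chain_nth: "k < m \<Longrightarrow> pf_cover n (C ! k) (C ! Suc k)"
  using chain unfolding complete_chains_def by (auto simp: less_Suc_eq_le[symmetric])

lemma length_jh_perm: "length (jh_perm C) = m"
  using length_chain unfolding jh_perm_def by simp

lemma nth_jh_perm: "k < m \<Longrightarrow> jh_perm C ! k = edge_label (C ! k) (C ! Suc k)"
  using length_chain unfolding jh_perm_def by simp

lemma chain_Suc_insert:
  assumes "k < m"
  obtains a where "(a, jh_perm C ! k) \<notin> C ! k" and "C ! Suc k = insert (a, jh_perm C ! k) (C ! k)"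
proof -
  obtain e where e: "e \<notin> C ! k" "C ! Suc k = insert e (C ! k)"
    using pf_cover_insert[OF pf_cover_chain_nth[OF assms]] .
  then have "C ! Suc k - C ! k = {e}" by auto
  then have "jh_perm C ! k = snd e" using nth_jh_perm[OF assms] unfolding edge_label_def by simp
  with e that show ?thesis by (metis prod.collapse)
qed

lemma chain_mono: "k \<le> k' \<Longrightarrow> k' \<le> m \<Longrightarrow> C ! k \<subseteq> C ! k'"
proof (induction k' rule: dec_induct)
  case (step k')
  then have "k' < m" by simp
  then obtain a where "(a, jh_perm C ! k') \<notin> C ! k'"
    and "C ! Suc k' = insert (a, jh_perm C ! k') (C ! k')"
    by (rule chain_Suc_insert)
  with step show ?case by auto
qed simp

lemma last_chain: "last C = C ! m"
  using length_chain last_conv_nth[of C] by fastforce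

lemma local_priority_forest_last_chain: "local_priority_forest n (last C)"
  using last_chain priority_forest_chain_nth priority_forest_iff_local by simp

lemma chain_nth_eq: "k \<le> m \<Longrightarrow> C ! k = {(x, y) \<in> last C. y \<in> set (take k (jh_perm C))}"
proof (induction k)
  case 0
  then show ?case using chain_nth_0 by simp
next
  case (Suc k)
  let ?y = "jh_perm C ! k"
  obtain a where a: "C ! Suc k = insert (a, ?y) (C ! k)"
    using chain_Suc_insert[of k] Suc.prems by auto
  then have "(a, ?y) \<in> last C" using chain_mono[of "Suc k" m] Suc.prems last_chain by auto
  then have "(x, ?y) \<in> last C \<longleftrightarrow> x = a" for x
    using local_priority_forest_parent_unique[OF local_priority_forest_last_chain] by blast
  moreover have "take (Suc k) (jh_perm C) = take k (jh_perm C) @ [?y]"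
    using Suc.prems length_jh_perm by (simp add: take_Suc_conv_app_nth)
  ultimately show ?case using Suc a by auto
qed

lemma jh_perm_edge:
  assumes "k < m"
  obtains a where "(a, jh_perm C ! k) \<in> C ! Suc k" and "(a, jh_perm C ! k) \<in> last C"
    and "a < jh_perm C ! k" and "jh_perm C ! k \<le> n"
proof -
  obtain a where a: "(a, jh_perm C ! k) \<in> C ! Suc k"
    using chain_Suc_insert[OF assms] by (metis insertI1)
  then have top: "(a, jh_perm C ! k) \<in> last C"
    using chain_mono[of "Suc k" m] assms last_chain by auto
  show ?thesis
  proof (rule that[OF a top])
    show "a < jh_perm C ! k"
      using local_priority_forest_edge_less[OF local_priority_forest_last_chain top] .
    show "jh_perm C ! k \<le> n"
      using local_priority_forest_edge_le[OF local_priority_forest_last_chain top] by simp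
  qed
qed

lemma jh_perm_range: "set (jh_perm C) \<subseteq> {1..n}"
proof
  fix y assume "y \<in> set (jh_perm C)"
  then obtain k where k: "k < m" "y = jh_perm C ! k"
    using length_jh_perm by (auto simp: in_set_conv_nth)
  then obtain a where "a < y" "y \<le> n" using jh_perm_edge by metis
  then show "y \<in> {1..n}" by simp
qed

lemma jh_perm_distinct: "distinct (jh_perm C)"
proof -
  have "jh_perm C ! i \<noteq> jh_perm C ! j" if ij: "i < j" "j < m" for i j
  proof
    assume eq: "jh_perm C ! i = jh_perm C ! j"
    have "i < m" using ij by simp
    then obtain a where "(a, jh_perm C ! i) \<in> C ! Suc i" "(a, jh_perm C ! i) \<in> last C"
      "a < jh_perm C ! i" "jh_perm C ! i \<le> n"
      by (rule jh_perm_edge)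
    then have "(a, jh_perm C ! j) \<in> C ! j" using chain_mono[of "Suc i" j] ij eq by auto
    moreover obtain b where "(b, jh_perm C ! j) \<notin> C ! j" "C ! Suc j = insert (b, jh_perm C ! j) (C ! j)"
      using chain_Suc_insert[OF ij(2)] .
    moreover have "local_priority_forest n (C ! Suc j)"
      using priority_forest_chain_nth[of "Suc j"] ij(2) priority_forest_iff_local by simp
    ultimately show False
      using local_priority_forest_parent_unique[of n "C ! Suc j" a "jh_perm C ! j" b] by auto
  qed
  then show ?thesis unfolding distinct_conv_nth length_jh_perm by (metis linorder_neqE_nat)
qed

text \<open>This is why the inverse Jordan-Hoelder word obeys priority search: the vertices between
  the two ends of the \<open>k\<close>-th added edge were added earlier.\<close>
lemma jh_perm_between_edge:
  assumes k: "k < m" and a: "(a, jh_perm C ! k) \<in> C ! Suc k"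
    and y: "a < y" "y < jh_perm C ! k"
  shows "\<exists>k' < k. jh_perm C ! k' = y"
proof -
  have "local_priority_forest n (C ! Suc k)"
    using priority_forest_chain_nth[of "Suc k"] k priority_forest_iff_local by simp
  then obtain c where "(c, y) \<in> C ! Suc k"
    using local_priority_forest_has_parent a y by (meson less_imp_le)
  then have "y \<in> set (take (Suc k) (jh_perm C))" using chain_nth_eq[of "Suc k"] k by auto
  then obtain k' where "k' < Suc k" "jh_perm C ! k' = y"
    using length_jh_perm k by (auto simp: in_set_conv_nth)
  with y show ?thesis by (metis less_Suc_eq less_irrefl)
qed

lemma last_chain_edge_jh_perm:
  assumes "(x, y) \<in> last C"
  shows "y \<in> set (jh_perm C)"
proof -
  have "(x, y) \<in> C ! m" using assms last_chain by simp
  then show ?thesis using chain_nth_eq[of m] length_jh_perm by simp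
qed

end

lemma complete_chains_eqI:
  assumes C: "C \<in> complete_chains n m" and C': "C' \<in> complete_chains n m"
    and "last C = last C'" and "inv_pperm n (jh_perm C) = inv_pperm n (jh_perm C')"
  shows "C = C'"
proof -
  have "jh_perm C = jh_perm C'"
    by (rule inv_pperm_inj[OF jh_perm_distinct[OF C] jh_perm_range[OF C] jh_perm_distinct[OF C']
          jh_perm_range[OF C']]) (simp_all add: length_jh_perm[OF C] length_jh_perm[OF C'] assms(4))
  show ?thesis
  proof (rule nth_equalityI)
    show "length C = length C'" using length_chain[OF C] length_chain[OF C'] by simp
    fix k assume "k < length C"
    then have "k \<le> m" using length_chain[OF C] by simp
    with \<open>jh_perm C = jh_perm C'\<close> show "C ! k = C' ! k"
      using chain_nth_eq[OF C] chain_nth_eq[OF C'] assms(3) by simp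
  qed
qed

section \<open>Priority search\<close>

definition count_None :: "nat option list \<Rightarrow> nat" where
  "count_None xs = length (filter (\<lambda>x. x = None) xs)"

lemma count_None_simps [simp]:
  "count_None [] = 0"
  "count_None (xs @ ys) = count_None xs + count_None ys"
  "count_None [None] = 1"
  "count_None [Some i] = 0"
  unfolding count_None_def by simp_all

lemma count_None_take_mono:
  assumes "q' \<le> q"
  shows "count_None (take q' s) \<le> count_None (take q s)"
proof -
  have "take q s = take q' s @ drop q' (take q s)"
    using assms by (metis append_take_drop_id min.absorb1 take_take)
  then show ?thesis by (metis count_None_simps(2) le_add1)
qed

lemma count_None_take_Suc:
  "q < length s \<Longrightarrow> count_None (take (Suc q) s) = count_None (take q s) + (if s ! q = None then 1 else 0)"
  unfolding count_None_def by (simp add: take_Suc_conv_app_nth)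

lemma count_None_take_le_iff:
  assumes "p < length s" "s ! p = None"
  shows "count_None (take (Suc p) s) \<le> count_None (take q s) \<longleftrightarrow> Suc p \<le> q"
proof
  assume le: "count_None (take (Suc p) s) \<le> count_None (take q s)"
  show "Suc p \<le> q"
  proof (rule ccontr)
    assume "\<not> Suc p \<le> q"
    then have "count_None (take q s) \<le> count_None (take p s)" using count_None_take_mono by simp
    with le assms count_None_take_Suc[of p s] show False by simp
  qed
qed (rule count_None_take_mono)

text \<open>The root \<open>Rt 0\<close> counts as visited from the start; the \<open>j\<close>-th \<open>None\<close> of \<open>s\<close>
  visits \<open>Rt j\<close>.\<close>
definition visited :: "nat option list \<Rightarrow> nat \<Rightarrow> overt set" where
  "visited s q = Lb ` {i. Some i \<in> set (take q s)} \<union> Rt ` {0..count_None (take q s)}"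

lemma visited_mono: "q' \<le> q \<Longrightarrow> visited s q' \<subseteq> visited s q"
  unfolding visited_def using count_None_take_mono[of q' q s] set_take_subset_set_take[of q' q s]
  by auto

lemma visited_append: "q \<le> length p \<Longrightarrow> visited (p @ xs) q = visited p q"
  unfolding visited_def by simp

lemma visited_length: "visited p (length p) = Lb ` {i. Some i \<in> set p} \<union> Rt ` {0..count_None p}"
  unfolding visited_def by simp

definition unblocked :: "nat \<Rightarrow> oforest \<Rightarrow> nat option list \<Rightarrow> nat \<Rightarrow> nat set" where
  "unblocked m F s q =
     {i \<in> {1..m}. Some i \<notin> set (take q s) \<and> (\<exists>v. F i = Some v \<and> v \<in> visited s q)}"

lemma unblocked_take_cong: "take q s = take q s' \<Longrightarrow> unblocked m F s q = unblocked m F s' q"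
  unfolding unblocked_def visited_def by simp

text \<open>The last clause says that, while the label was unblocked, only smaller labels were
  preferred to it.\<close>
definition priority_step :: "nat \<Rightarrow> oforest \<Rightarrow> nat option list \<Rightarrow> nat \<Rightarrow> bool" where
  "priority_step m F s q \<longleftrightarrow> (\<forall>i. s ! q = Some i \<longrightarrow>
     i \<in> {1..m} \<and> Some i \<notin> set (take q s) \<and>
     (\<exists>v. F i = Some v \<and> v \<in> visited s q
        \<and> (\<forall>q' < q. v \<in> visited s q' \<longrightarrow> (\<exists>i'. s ! q' = Some i' \<and> i' < i))))"

definition priority_prefix :: "nat \<Rightarrow> oforest \<Rightarrow> nat option list \<Rightarrow> bool" where
  "priority_prefix m F s \<longleftrightarrow> (\<forall>q < length s. priority_step m F s q)"

definition priority_word :: "nat \<Rightarrow> nat \<Rightarrow> oforest \<Rightarrow> nat option list \<Rightarrow> bool" where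
  "priority_word m n F s \<longleftrightarrow>
     length s = n \<and> (\<forall>i \<in> {1..m}. Some i \<in> set s) \<and> priority_prefix m F s"

lemma priority_step_append:
  assumes "q < length p"
  shows "priority_step m F (p @ xs) q \<longleftrightarrow> priority_step m F p q"
proof -
  have "visited (p @ xs) q' = visited p q' \<and> (p @ xs) ! q' = p ! q'" if "q' \<le> q" for q'
    using that assms visited_append[of q' p xs] by (simp add: nth_append)
  with assms show ?thesis unfolding priority_step_def by simp
qed

lemma priority_prefix_snoc:
  "priority_prefix m F (p @ [x]) \<longleftrightarrow> priority_prefix m F p \<and> priority_step m F (p @ [x]) (length p)"
  unfolding priority_prefix_def using priority_step_append
  by (auto simp: less_Suc_eq)

lemma priority_word_nth_less_unblocked:
  assumes s: "priority_word m n F s" and q: "q < n"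
    and y: "y \<in> unblocked m F s q" and "s ! q \<noteq> Some y"
  shows "\<exists>i'. s ! q = Some i' \<and> i' < y"
proof -
  obtain v where y_new: "Some y \<notin> set (take q s)" and v: "F y = Some v" "v \<in> visited s q"
    and "y \<in> {1..m}"
    using y unfolding unblocked_def by blast
  then have "Some y \<in> set s" using s unfolding priority_word_def by blast
  then obtain q2 where q2: "q2 < n" "s ! q2 = Some y"
    using s unfolding priority_word_def by (auto simp: in_set_conv_nth)
  have "\<not> q2 < q"
  proof
    assume "q2 < q"
    then have "take q s ! q2 = Some y" "q2 < length (take q s)"
      using q q2 s unfolding priority_word_def by auto
    with y_new show False by (metis nth_mem)
  qed
  with \<open>s ! q \<noteq> Some y\<close> q2 have "q < q2" by (cases "q = q2") auto
  have "priority_step m F s q2" using s q2 unfolding priority_word_def priority_prefix_def by simp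
  then have "\<forall>q' < q2. v \<in> visited s q' \<longrightarrow> (\<exists>i'. s ! q' = Some i' \<and> i' < y)"
    using q2 v unfolding priority_step_def by auto
  with v \<open>q < q2\<close> show ?thesis by blast
qed

lemma priority_word_nth:
  assumes s: "priority_word m n F s" and q: "q < n"
  shows "s ! q = (if unblocked m F s q = {} then None else Some (Min (unblocked m F s q)))"
proof (cases "s ! q")
  case None
  have "y \<notin> unblocked m F s q" for y
    using priority_word_nth_less_unblocked[OF s q, of y] None by auto
  then have "unblocked m F s q = {}" by blast
  with None show ?thesis by simp
next
  case (Some x)
  have "priority_step m F s q" using s q unfolding priority_word_def priority_prefix_def by simp
  then have "x \<in> {1..m} \<and> Some x \<notin> set (take q s) \<and> (\<exists>v. F x = Some v \<and> v \<in> visited s q)"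
    using Some unfolding priority_step_def by blast
  then have "x \<in> unblocked m F s q" unfolding unblocked_def by simp
  moreover have "x \<le> y" if "y \<in> unblocked m F s q" for y
    using priority_word_nth_less_unblocked[OF s q that] Some by (cases "x = y") auto
  moreover have "finite (unblocked m F s q)" unfolding unblocked_def by simp
  ultimately have "Min (unblocked m F s q) = x" by (intro Min_eqI)
  with Some \<open>x \<in> unblocked m F s q\<close> show ?thesis by auto
qed

lemma priority_word_unique:
  assumes s: "priority_word m n F s" and s': "priority_word m n F s'"
  shows "s = s'"
proof -
  have len: "length s = n" "length s' = n" using s s' unfolding priority_word_def by simp_all
  have "take q s = take q s'" if "q \<le> n" for q
    using that
  proof (induction q)
    case (Suc q)
    then have q: "q < n" and IH: "take q s = take q s'" by simp_all
    from IH have "unblocked m F s q = unblocked m F s' q" by (rule unblocked_take_cong)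
    then have "s ! q = s' ! q" using priority_word_nth[OF s q] priority_word_nth[OF s' q] by simp
    with IH q len show ?case by (simp add: take_Suc_conv_app_nth)
  qed simp
  from this[of n] len show ?thesis by simp
qed

definition forest_vertices :: "nat \<Rightarrow> nat \<Rightarrow> overt set" where
  "forest_vertices m n = Rt ` {0..n - m} \<union> Lb ` {1..m}"

definition respects_priority :: "oforest \<Rightarrow> nat option list \<Rightarrow> nat \<Rightarrow> bool" where
  "respects_priority F p i \<longleftrightarrow> (\<forall>v. F i = Some v \<longrightarrow>
     (\<forall>q < length p. v \<in> visited p q \<longrightarrow> (\<exists>i'. p ! q = Some i' \<and> i' < i)))"

lemma priority_step_snoc_None: "priority_step m F (p @ [None]) (length p)"
  unfolding priority_step_def by simp

lemma priority_step_snoc_Some: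
  "priority_step m F (p @ [Some x]) (length p) \<longleftrightarrow>
     x \<in> unblocked m F p (length p) \<and> respects_priority F p x"
proof -
  have "visited (p @ [Some x]) q = visited p q \<and> (p @ [Some x]) ! q = p ! q" if "q < length p" for q
    using that visited_append[of q p] by (simp add: nth_append)
  then show ?thesis
    unfolding priority_step_def unblocked_def respects_priority_def
    using visited_append[of "length p" p "[Some x]"] by auto
qed

lemma respects_priority_snoc_if_parent_unvisited:
  assumes "F i = Some v" and "v \<notin> visited p (length p)"
  shows "respects_priority F (p @ [y]) i"
proof -
  have "v \<notin> visited (p @ [y]) q" if "q < length (p @ [y])" for q
    using that assms visited_mono[of q "length p" p] visited_append[of q p] by auto
  with assms show ?thesis unfolding respects_priority_def by auto
qed

lemma respects_priority_snoc_less: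
  assumes "respects_priority F p i" and "x < i"
  shows "respects_priority F (p @ [Some x]) i"
proof -
  have "visited (p @ [Some x]) q = visited p q \<and> (p @ [Some x]) ! q = p ! q" if "q < length p" for q
    using that visited_append[of q p] by (simp add: nth_append)
  with assms show ?thesis unfolding respects_priority_def by (auto simp: less_Suc_eq)
qed

lemma priority_prefix_parent_visited:
  assumes "priority_prefix m F p" and "Some i \<in> set p"
  shows "i \<in> {1..m} \<and> (\<exists>v. F i = Some v \<and> v \<in> visited p (length p))"
proof -
  obtain q where q: "q < length p" "p ! q = Some i" using assms(2) by (auto simp: in_set_conv_nth)
  then have "priority_step m F p q" using assms(1) unfolding priority_prefix_def by simp
  with q show ?thesis
    unfolding priority_step_def using visited_mono[of q "length p" p] by fastforce
qed

text \<open>Invariant of \<open>ptrav_aux\<close> after emitting \<open>p\<close>; its unblocked set is then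
  \<open>unblocked m F p (length p)\<close> and its tree index is \<open>count_None p\<close>.\<close>
definition priority_state :: "nat \<Rightarrow> nat \<Rightarrow> oforest \<Rightarrow> nat option list \<Rightarrow> bool" where
  "priority_state m n F p \<longleftrightarrow> priority_prefix m F p \<and> count_None p \<le> n - m
     \<and> (\<forall>i \<in> unblocked m F p (length p). respects_priority F p i)"

context
  fixes m n :: nat and F :: oforest
  assumes forest: "F \<in> ordered_forests m n"
begin

lemma ordered_forest_SomeD: "F i = Some v \<Longrightarrow> i \<in> {1..m} \<and> v \<in> forest_vertices m n"
  using forest unfolding ordered_forests_def forest_vertices_def by (auto simp: ran_def)

lemma ordered_forest_Some: "i \<in> {1..m} \<Longrightarrow> \<exists>v. F i = Some v"
  using forest unfolding ordered_forests_def by auto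

lemma ordered_forest_no_loop: "F i \<noteq> Some (Lb i)"
proof
  assume "F i = Some (Lb i)"
  then have "(Lb i, Lb i) \<in> {(Lb i, v) | i v. F i = Some v}\<^sup>+" by auto
  then show False using forest unfolding ordered_forests_def acyclic_def by auto
qed

text \<open>A missing label that is minimal for the acyclic parent relation has its parent present.\<close>
lemma ordered_forest_exists_unblocked:
  assumes "i0 \<in> {1..m} - V"
  shows "\<exists>i \<in> {1..m} - V. \<exists>v. F i = Some v \<and> v \<in> Lb ` V \<union> Rt ` {0..n - m}"
proof -
  define R where "R = {(Lb i, v) | i v. F i = Some v}"
  have "R \<subseteq> (\<lambda>i. (Lb i, the (F i))) ` {1..m}"
    unfolding R_def using ordered_forest_SomeD by force
  then have "finite R" using finite_subset by blast
  moreover have "acyclic R" using forest unfolding R_def ordered_forests_def by simp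
  ultimately have "wf (R\<inverse>)" by (rule finite_acyclic_wf_converse)
  then obtain z where z: "z \<in> Lb ` ({1..m} - V)" "\<forall>y. (y, z) \<in> R\<inverse> \<longrightarrow> y \<notin> Lb ` ({1..m} - V)"
    using assms unfolding wf_eq_minimal by (metis imageI)
  then obtain i where i: "z = Lb i" "i \<in> {1..m} - V" by auto
  obtain v where v: "F i = Some v" using ordered_forest_Some i by auto
  then have "v \<notin> Lb ` ({1..m} - V)" using z i unfolding R_def by auto
  with ordered_forest_SomeD[OF v] i v show ?thesis unfolding forest_vertices_def by blast
qed

lemma unblocked_snoc_Some:
  assumes prefix: "priority_prefix m F p" and x: "x \<in> unblocked m F p (length p)"
  shows "unblocked m F (p @ [Some x]) (length (p @ [Some x]))
           = unblocked m F p (length p) - {x} \<union> ochildren F (Lb x)"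
    (is "?U' = ?U - {x} \<union> _")
proof
  show "?U' \<subseteq> ?U - {x} \<union> ochildren F (Lb x)"
    unfolding unblocked_def ochildren_def visited_length by auto
  have "Lb x \<notin> visited p (length p)" using x unfolding unblocked_def visited_length by auto
  then have "i \<in> ?U'" if i: "F i = Some (Lb x)" for i
  proof -
    have "Some i \<notin> set p"
      using priority_prefix_parent_visited[OF prefix] i \<open>Lb x \<notin> visited p (length p)\<close> by force
    moreover have "i \<noteq> x" using ordered_forest_no_loop[of i] i by auto
    ultimately show ?thesis
      using i ordered_forest_SomeD[OF i] unfolding unblocked_def visited_length by auto
  qed
  moreover have "?U - {x} \<subseteq> ?U'" unfolding unblocked_def visited_length by auto
  ultimately show "?U - {x} \<union> ochildren F (Lb x) \<subseteq> ?U'" unfolding ochildren_def by blast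
qed

lemma priority_state_snoc_Some:
  assumes p: "priority_state m n F p" and ne: "unblocked m F p (length p) \<noteq> {}"
  defines "U \<equiv> unblocked m F p (length p)" and "x \<equiv> Min (unblocked m F p (length p))"
  shows "priority_state m n F (p @ [Some x])"
    and "unblocked m F (p @ [Some x]) (length (p @ [Some x])) = U - {x} \<union> ochildren F (Lb x)"
proof -
  have "finite U" unfolding U_def unblocked_def by simp
  then have x: "x \<in> U" and x_le: "\<And>y. y \<in> U \<Longrightarrow> x \<le> y"
    using ne unfolding U_def x_def by (simp_all add: Min_in)
  have prefix: "priority_prefix m F p" and resp: "\<forall>i \<in> U. respects_priority F p i"
    using p unfolding priority_state_def U_def by simp_all
  show U': "unblocked m F (p @ [Some x]) (length (p @ [Some x])) = U - {x} \<union> ochildren F (Lb x)"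
    using unblocked_snoc_Some[OF prefix] x unfolding U_def by simp
  have "Lb x \<notin> visited p (length p)" using x unfolding U_def unblocked_def visited_length by auto
  then have "respects_priority F (p @ [Some x]) i"
    if "i \<in> unblocked m F (p @ [Some x]) (length (p @ [Some x]))" for i
  proof (cases "i \<in> U - {x}")
    case True
    then have "x < i" using x_le[of i] by simp
    with True resp show ?thesis using respects_priority_snoc_less by blast
  next
    case False
    with that U' have "F i = Some (Lb x)" unfolding ochildren_def by auto
    with \<open>Lb x \<notin> visited p (length p)\<close> show ?thesis
      using respects_priority_snoc_if_parent_unvisited by blast
  qed
  moreover have "priority_step m F (p @ [Some x]) (length p)"
    using x resp priority_step_snoc_Some unfolding U_def by blast
  then have "priority_prefix m F (p @ [Some x])" using prefix priority_prefix_snoc by blast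
  ultimately show "priority_state m n F (p @ [Some x])"
    using p unfolding priority_state_def by simp
qed

lemma priority_state_snoc_None:
  assumes p: "priority_state m n F p" and empty: "unblocked m F p (length p) = {}"
    and j: "count_None p < n - m"
  shows "priority_state m n F (p @ [None])"
    and "unblocked m F (p @ [None]) (length (p @ [None])) = ochildren F (Rt (Suc (count_None p)))"
proof -
  let ?r = "Rt (Suc (count_None p))"
  have prefix: "priority_prefix m F p" using p unfolding priority_state_def by simp
  have r: "?r \<notin> visited p (length p)" unfolding visited_length by auto
  show U': "unblocked m F (p @ [None]) (length (p @ [None])) = ochildren F ?r"
  proof
    show "unblocked m F (p @ [None]) (length (p @ [None])) \<subseteq> ochildren F ?r"
      using empty unfolding unblocked_def ochildren_def visited_length
      by (fastforce simp: le_Suc_eq)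
    have "Some i \<notin> set p" if "F i = Some ?r" for i
      using priority_prefix_parent_visited[OF prefix] that r by fastforce
    then show "ochildren F ?r \<subseteq> unblocked m F (p @ [None]) (length (p @ [None]))"
      using ordered_forest_SomeD unfolding unblocked_def ochildren_def visited_length by fastforce
  qed
  have "respects_priority F (p @ [None]) i"
    if "i \<in> unblocked m F (p @ [None]) (length (p @ [None]))" for i
    using that U' r respects_priority_snoc_if_parent_unvisited unfolding ochildren_def by blast
  moreover have "priority_prefix m F (p @ [None])"
    using prefix priority_prefix_snoc priority_step_snoc_None by blast
  ultimately show "priority_state m n F (p @ [None])"
    using p j unfolding priority_state_def by simp
qed

lemma priority_state_complete:
  assumes p: "priority_state m n F p" and empty: "unblocked m F p (length p) = {}"
    and j: "\<not> count_None p < n - m"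
  shows "{1..m} \<subseteq> {i. Some i \<in> set p}"
proof
  fix i0 assume "i0 \<in> {1..m}"
  show "i0 \<in> {i. Some i \<in> set p}"
  proof (rule ccontr)
    assume "i0 \<notin> {i. Some i \<in> set p}"
    with \<open>i0 \<in> {1..m}\<close> obtain i v where "i \<in> {1..m}" "Some i \<notin> set p" "F i = Some v"
      "v \<in> Lb ` {i. Some i \<in> set p} \<union> Rt ` {0..n - m}"
      using ordered_forest_exists_unblocked[of i0 "{i. Some i \<in> set p}"] by blast
    moreover have "count_None p = n - m" using p j unfolding priority_state_def by simp
    ultimately have "i \<in> unblocked m F p (length p)" unfolding unblocked_def visited_length by auto
    with empty show False by simp
  qed
qed

text \<open>The fuel \<open>k\<close> is the number of remaining steps: one per missing label and one per
  remaining root.\<close>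
lemma ptrav_aux_priority_word:
  assumes "priority_state m n F p"
    and "k = card ({1..m} - {i. Some i \<in> set p}) + (n - m - count_None p)"
  shows "priority_word m (length p + k) F
           (p @ ptrav_aux F (n - m) k (count_None p) (unblocked m F p (length p)))"
  using assms
proof (induction k arbitrary: p)
  case 0
  then have "{1..m} \<subseteq> {i. Some i \<in> set p}" by auto
  with "0.prems"(1) show ?case unfolding priority_word_def priority_state_def by auto
next
  case (Suc k)
  let ?U = "unblocked m F p (length p)"
  consider "?U \<noteq> {}" | "?U = {}" "count_None p < n - m" | "?U = {}" "\<not> count_None p < n - m"
    by blast
  then show ?case
  proof cases
    case 1
    define x where "x = Min ?U"
    have "finite ?U" unfolding unblocked_def by simp
    with 1 have "x \<in> ?U" unfolding x_def by (intro Min_in)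
    then have "{1..m} - {i. Some i \<in> set p} = insert x ({1..m} - {i. Some i \<in> set (p @ [Some x])})"
      unfolding unblocked_def by auto
    moreover have "x \<notin> {1..m} - {i. Some i \<in> set (p @ [Some x])}" by simp
    ultimately have "k = card ({1..m} - {i. Some i \<in> set (p @ [Some x])})
                         + (n - m - count_None (p @ [Some x]))"
      using Suc.prems(2) by simp
    from Suc.IH[OF priority_state_snoc_Some(1)[OF Suc.prems(1) 1] this[unfolded x_def]]
    show ?thesis
      using 1 priority_state_snoc_Some(2)[OF Suc.prems(1) 1] unfolding x_def by simp
  next
    case 2
    have "k = card ({1..m} - {i. Some i \<in> set (p @ [None])}) + (n - m - count_None (p @ [None]))"
      using Suc.prems(2) 2 by simp
    from Suc.IH[OF priority_state_snoc_None(1)[OF Suc.prems(1) 2] this]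
    show ?thesis
      using 2 priority_state_snoc_None(2)[OF Suc.prems(1) 2] by simp
  next
    case 3
    then have "{1..m} - {i. Some i \<in> set p} = {}"
      using priority_state_complete[OF Suc.prems(1)] by blast
    then have "card ({1..m} - {i. Some i \<in> set p}) = 0" by (metis card.empty)
    moreover have "n - m - count_None p = 0" using 3 by simp
    ultimately show ?thesis using Suc.prems(2) by linarith
  qed
qed

lemma priority_word_priority_traversal:
  assumes "m \<le> n"
  shows "priority_word m n F (priority_traversal m n F)"
proof -
  have "unblocked m F [] 0 = ochildren F (Rt 0)"
    unfolding unblocked_def ochildren_def visited_def using ordered_forest_SomeD by auto
  moreover have "priority_state m n F []"
    unfolding priority_state_def priority_prefix_def respects_priority_def by simp
  moreover have "n = card ({1..m} - {i. Some i \<in> set []}) + (n - m - count_None [])"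
    using assms by simp
  ultimately show ?thesis
    using ptrav_aux_priority_word[of "[]" n] unfolding priority_traversal_def by simp
qed

end

section \<open>Positions of vertices in a traversal\<close>

definition label_word :: "nat \<Rightarrow> nat \<Rightarrow> nat option list \<Rightarrow> bool" where
  "label_word m n s \<longleftrightarrow> length s = n \<and> (\<forall>i \<in> {1..m}. Some i \<in> set s)
     \<and> (\<forall>q < n. \<forall>i. s ! q = Some i \<longrightarrow> i \<in> {1..m} \<and> Some i \<notin> set (take q s))"

lemma label_word_if_priority_word: "priority_word m n F s \<Longrightarrow> label_word m n s"
  unfolding priority_word_def priority_prefix_def priority_step_def label_word_def by auto

lemma exists_nth_None_count_None:
  "1 \<le> j \<Longrightarrow> j \<le> count_None xs \<Longrightarrow> \<exists>q < length xs. xs ! q = None \<and> count_None (take (Suc q) xs) = j"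
proof (induction xs arbitrary: j)
  case (Cons x xs)
  show ?case
  proof (cases "x = None \<and> j = 1")
    case True
    then show ?thesis by (intro exI[of _ 0]) (simp add: count_None_def)
  next
    case False
    then have "1 \<le> j - count_None [x]" "j - count_None [x] \<le> count_None xs"
      using Cons.prems by (cases x; auto simp: count_None_def)+
    then obtain q where "q < length xs" "xs ! q = None" "count_None (take (Suc q) xs) = j - count_None [x]"
      using Cons.IH by blast
    with Cons.prems False show ?thesis
      by (intro exI[of _ "Suc q"]) (cases x; auto simp: count_None_def)
  qed
qed (simp add: count_None_def)

lemma nth_None_count_None_inj:
  assumes "q < length xs" "q' < length xs" "xs ! q = None" "xs ! q' = None"
    and "count_None (take (Suc q) xs) = count_None (take (Suc q') xs)"
  shows "q = q'"
proof -
  have less: "count_None (take (Suc a) xs) < count_None (take (Suc b) xs)"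
    if "a < b" "b < length xs" "xs ! b = None" for a b
    using count_None_take_mono[of "Suc a" b xs] count_None_take_Suc[of b xs] that by simp
  show ?thesis using less[of q q'] less[of q' q] assms by (metis linorder_neqE_nat less_not_refl)
qed

context
  fixes m n :: nat and s :: "nat option list"
  assumes word: "label_word m n s"
begin

lemma length_label_word: "length s = n"
  using word unfolding label_word_def by simp

lemma label_word_nth_Some: "q < n \<Longrightarrow> s ! q = Some i \<Longrightarrow> i \<in> {1..m}"
  using word unfolding label_word_def by auto

lemma label_word_nth_Some_inj:
  assumes "q < n" "q' < n" "s ! q = Some i" "s ! q' = Some i"
  shows "q = q'"
proof -
  have False if "a < b" "b < n" "s ! a = Some i" "s ! b = Some i" for a b
  proof -
    have "take b s ! a = Some i" "a < length (take b s)" using that length_label_word by auto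
    then have "Some i \<in> set (take b s)" by (metis nth_mem)
    with word that show False unfolding label_word_def by auto
  qed
  with assms show ?thesis by (metis linorder_neqE_nat)
qed

lemma label_word_exists_nth: "i \<in> {1..m} \<Longrightarrow> \<exists>q < n. s ! q = Some i"
  using word unfolding label_word_def by (metis in_set_conv_nth)

lemma visit_pos_Lb:
  assumes "q < n" "s ! q = Some i"
  shows "visit_pos s (Lb i) = Suc q"
proof -
  have "(THE k. k < length s \<and> s ! k = Some i) = q"
    using assms label_word_nth_Some_inj length_label_word by (intro the_equality) auto
  then show ?thesis unfolding visit_pos_def by simp
qed

lemma count_None_label_word: "count_None s = n - m \<and> m \<le> n"
proof -
  let ?A = "{q. q < n \<and> s ! q \<noteq> None}"
  have "bij_betw (\<lambda>q. the (s ! q)) ?A {1..m}"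
  proof (rule bij_betw_imageI)
    show "inj_on (\<lambda>q. the (s ! q)) ?A"
      using label_word_nth_Some_inj by (intro inj_onI) (metis (mono_tags) mem_Collect_eq option.collapse)
    show "(\<lambda>q. the (s ! q)) ` ?A = {1..m}"
      using label_word_nth_Some label_word_exists_nth by (fastforce simp: image_iff)
  qed
  then have "card ?A = m" by (simp add: bij_betw_same_card)
  moreover have "length (filter (\<lambda>x. x \<noteq> None) s) = card ?A"
    using length_label_word by (simp add: length_filter_conv_card)
  moreover have "count_None s + length (filter (\<lambda>x. x \<noteq> None) s) = n"
    using sum_length_filter_compl[of "\<lambda>x. x = None" s] length_label_word
    unfolding count_None_def by simp
  ultimately show ?thesis by auto
qed

lemma visit_pos_Rt:
  assumes "q < n" "s ! q = None" "count_None (take (Suc q) s) = j" "1 \<le> j"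
  shows "visit_pos s (Rt j) = Suc q"
proof -
  have "(THE k. k < length s \<and> s ! k = None \<and> count_None (take (Suc k) s) = j) = q"
    using assms nth_None_count_None_inj length_label_word by (intro the_equality) auto
  then show ?thesis unfolding visit_pos_def count_None_def using assms by simp
qed

lemma exists_visit_pos_Rt:
  assumes "1 \<le> j" "j \<le> n - m"
  obtains q where "q < n" "s ! q = None" "count_None (take (Suc q) s) = j"
    and "visit_pos s (Rt j) = Suc q"
  using exists_nth_None_count_None[of j s] count_None_label_word length_label_word visit_pos_Rt assms
  by metis

lemma Some_in_set_take_label_word_iff:
  assumes "p < n" "s ! p = Some i"
  shows "Some i \<in> set (take q s) \<longleftrightarrow> p < q"
proof
  assume "Some i \<in> set (take q s)"
  then obtain k where "k < q" "k < n" "s ! k = Some i"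
    using length_label_word by (auto simp: in_set_conv_nth)
  then show "p < q" using label_word_nth_Some_inj[of k p i] assms by auto
next
  assume "p < q"
  then have "take q s ! p = Some i" "p < length (take q s)" using assms length_label_word by auto
  then show "Some i \<in> set (take q s)" by (metis nth_mem)
qed

lemma visited_iff_visit_pos_le:
  assumes v: "v \<in> forest_vertices m n"
  shows "v \<in> visited s q \<longleftrightarrow> visit_pos s v \<le> q"
proof (cases v)
  case (Lb i)
  then have "i \<in> {1..m}" using v unfolding forest_vertices_def by auto
  then obtain p where p: "p < n" "s ! p = Some i" using label_word_exists_nth by blast
  then show ?thesis
    using Lb p visit_pos_Lb Some_in_set_take_label_word_iff unfolding visited_def by auto
next
  case (Rt j)
  show ?thesis
  proof (cases "j = 0")
    case True
    then show ?thesis using Rt unfolding visited_def visit_pos_def by auto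
  next
    case False
    moreover have "j \<le> n - m" using v Rt unfolding forest_vertices_def by auto
    ultimately obtain p where p: "p < n" "s ! p = None" "count_None (take (Suc p) s) = j"
      "visit_pos s (Rt j) = Suc p"
      by (metis exists_visit_pos_Rt less_one not_less)
    then show ?thesis
      using Rt count_None_take_le_iff[of p s q] length_label_word unfolding visited_def by auto
  qed
qed

lemma visit_pos_relabel_vertex:
  assumes a: "a \<le> n"
  shows "relabel_vertex s a \<in> forest_vertices m n \<and> visit_pos s (relabel_vertex s a) = a"
proof (cases "a = 0")
  case True
  then show ?thesis unfolding relabel_vertex_def forest_vertices_def visit_pos_def by auto
next
  case False
  then have a1: "a - 1 < n" "Suc (a - 1) = a" using a by auto
  show ?thesis
  proof (cases "s ! (a - 1)")
    case None
    let ?c = "count_None (take a s)"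
    have rv: "relabel_vertex s a = Rt ?c"
      using False None unfolding relabel_vertex_def count_None_def by auto
    have c: "?c = count_None (take (a - 1) s) + 1"
      using count_None_take_Suc[of "a - 1" s] a1 None length_label_word by auto
    have "?c \<le> count_None s" using count_None_take_mono[of a "length s" s] a length_label_word by auto
    then have "?c \<le> n - m" using count_None_label_word by auto
    moreover have "visit_pos s (Rt ?c) = a" using visit_pos_Rt[of "a - 1" ?c] a1 None c by auto
    ultimately show ?thesis using rv unfolding forest_vertices_def by auto
  next
    case (Some i)
    then have "relabel_vertex s a = Lb i" using False unfolding relabel_vertex_def by auto
    then show ?thesis
      using label_word_nth_Some[OF a1(1) Some] visit_pos_Lb[OF a1(1) Some] a1
      unfolding forest_vertices_def by auto
  qed
qed

lemma relabel_vertex_visit_pos: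
  assumes v: "v \<in> forest_vertices m n"
  shows "relabel_vertex s (visit_pos s v) = v \<and> visit_pos s v \<le> n"
proof (cases v)
  case (Lb i)
  then have "i \<in> {1..m}" using v unfolding forest_vertices_def by auto
  then obtain p where p: "p < n" "s ! p = Some i" using label_word_exists_nth by blast
  then show ?thesis using Lb visit_pos_Lb unfolding relabel_vertex_def by auto
next
  case (Rt j)
  show ?thesis
  proof (cases "j = 0")
    case True
    then show ?thesis using Rt unfolding relabel_vertex_def visit_pos_def by auto
  next
    case False
    moreover have "j \<le> n - m" using v Rt unfolding forest_vertices_def by auto
    ultimately obtain p where "p < n" "s ! p = None" "count_None (take (Suc p) s) = j"
      "visit_pos s (Rt j) = Suc p"
      by (metis exists_visit_pos_Rt less_one not_less)
    then show ?thesis using Rt unfolding relabel_vertex_def count_None_def by auto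
  qed
qed

lemma visit_pos_Lb_inj:
  assumes "i \<in> {1..m}" "i' \<in> {1..m}" "visit_pos s (Lb i) = visit_pos s (Lb i')"
  shows "i = i'"
proof -
  have "Lb i \<in> forest_vertices m n" "Lb i' \<in> forest_vertices m n"
    using assms(1,2) unfolding forest_vertices_def by auto
  then have "Lb i = Lb i'" using relabel_vertex_visit_pos assms(3) by metis
  then show ?thesis by simp
qed

lemma visit_pos_le: "v \<in> forest_vertices m n \<Longrightarrow> visit_pos s v \<le> n"
  using relabel_vertex_visit_pos by blast

end

lemma priority_word_parent_visit_pos:
  assumes s: "priority_word m n F s" and i: "F i = Some v" "i \<in> {1..m}"
    and v: "v \<in> forest_vertices m n"
  shows "visit_pos s v < visit_pos s (Lb i)"
    and "visit_pos s v < x \<Longrightarrow> x < visit_pos s (Lb i) \<Longrightarrow> \<exists>i'. s ! (x - 1) = Some i' \<and> i' < i"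
proof -
  have word: "label_word m n s" using s by (rule label_word_if_priority_word)
  obtain q where q: "q < n" "s ! q = Some i" using label_word_exists_nth[OF word i(2)] by blast
  then have pos: "visit_pos s (Lb i) = Suc q" using visit_pos_Lb[OF word] by simp
  have "priority_step m F s q" using s q unfolding priority_word_def priority_prefix_def by simp
  then have "v \<in> visited s q" and before: "\<forall>q' < q. v \<in> visited s q' \<longrightarrow> (\<exists>i'. s ! q' = Some i' \<and> i' < i)"
    using q i unfolding priority_step_def by auto
  then show "visit_pos s v < visit_pos s (Lb i)"
    using visited_iff_visit_pos_le[OF word v] q pos by simp
  assume "visit_pos s v < x" "x < visit_pos s (Lb i)"
  moreover from this have "v \<in> visited s (x - 1)"
    using visited_iff_visit_pos_le[OF word v, of "x - 1"] q pos by simp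
  ultimately show "\<exists>i'. s ! (x - 1) = Some i' \<and> i' < i" using before pos by simp
qed

section \<open>The forest of a chain\<close>

definition pf_parent :: "(nat \<times> nat) set \<Rightarrow> nat \<Rightarrow> nat" where
  "pf_parent E y = (THE p. (p, y) \<in> E)"

lemma pf_parent_eq: "local_priority_forest n E \<Longrightarrow> (a, y) \<in> E \<Longrightarrow> pf_parent E y = a"
  unfolding pf_parent_def using local_priority_forest_parent_unique by blast

lemma label_word_inv_pperm:
  assumes "distinct lam" "set lam \<subseteq> {1..n}"
  shows "label_word (length lam) n (inv_pperm n lam)"
  unfolding label_word_def
proof (intro conjI ballI allI impI)
  fix i assume "i \<in> {1..length lam}"
  then have "i - 1 < length lam" "Suc (i - 1) = i" by auto
  then show "Some i \<in> set (inv_pperm n lam)"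
    using nth_inv_pperm_nth[OF assms] by (metis inv_pperm_length nth_mem)
next
  fix q i assume q: "q < n" "inv_pperm n lam ! q = Some i"
  then show "i \<in> {1..length lam}" using nth_inv_pperm_Some[OF assms] by blast
  show "Some i \<notin> set (take q (inv_pperm n lam))"
  proof
    assume "Some i \<in> set (take q (inv_pperm n lam))"
    then obtain k where "k < q" "inv_pperm n lam ! k = Some i" by (auto simp: in_set_conv_nth)
    moreover from this have "k < n" using q by simp
    ultimately have "lam ! (i - 1) = Suc k" using nth_inv_pperm_Some[OF assms] by blast
    moreover have "lam ! (i - 1) = Suc q" using nth_inv_pperm_Some[OF assms] q by blast
    ultimately show False using \<open>k < q\<close> by simp
  qed
qed (simp add: inv_pperm_def)

lemma visit_pos_inv_pperm:
  assumes "distinct lam" "set lam \<subseteq> {1..n}" and "k < length lam"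
  shows "visit_pos (inv_pperm n lam) (Lb (Suc k)) = lam ! k"
proof -
  have "lam ! k \<ge> 1" using assms(2,3) nth_mem by fastforce
  moreover have "lam ! k - 1 < n" "inv_pperm n lam ! (lam ! k - 1) = Some (Suc k)"
    using nth_inv_pperm_nth[OF assms] by simp_all
  ultimately show ?thesis
    using visit_pos_Lb[OF label_word_inv_pperm[OF assms(1,2)], of "lam ! k - 1" "Suc k"] by simp
qed

context
  fixes n m :: nat and C :: "(nat \<times> nat) set list"
  assumes chain: "C \<in> complete_chains n m"
begin

lemma label_word_chain: "label_word m n (inv_pperm n (jh_perm C))"
  using label_word_inv_pperm[OF jh_perm_distinct[OF chain] jh_perm_range[OF chain]]
  by (simp add: length_jh_perm[OF chain])

lemma visit_pos_chain: "k < m \<Longrightarrow> visit_pos (inv_pperm n (jh_perm C)) (Lb (Suc k)) = jh_perm C ! k"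
  using visit_pos_inv_pperm[OF jh_perm_distinct[OF chain] jh_perm_range[OF chain]]
  by (simp add: length_jh_perm[OF chain])

lemma pf_parent_jh_perm:
  assumes "k < m"
  defines "a \<equiv> pf_parent (last C) (jh_perm C ! k)"
  shows "(a, jh_perm C ! k) \<in> C ! Suc k" "(a, jh_perm C ! k) \<in> last C" "a < jh_perm C ! k"
    "jh_perm C ! k \<le> n"
proof -
  obtain b where "(b, jh_perm C ! k) \<in> C ! Suc k" "(b, jh_perm C ! k) \<in> last C"
    "b < jh_perm C ! k" "jh_perm C ! k \<le> n"
    using jh_perm_edge[OF chain assms(1)] .
  moreover from this have "a = b"
    unfolding a_def using pf_parent_eq[OF local_priority_forest_last_chain[OF chain]] by blast
  ultimately show "(a, jh_perm C ! k) \<in> C ! Suc k" "(a, jh_perm C ! k) \<in> last C" "a < jh_perm C ! k"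
    "jh_perm C ! k \<le> n" by simp_all
qed

lemma last_chain_parent_edges:
  "last C = {(pf_parent (last C) (jh_perm C ! k), jh_perm C ! k) | k. k < m}"
    (is "_ = {(?p k, _) | k. _}")
proof (intro equalityI subsetI)
  fix e assume e: "e \<in> last C"
  obtain x y where xy: "e = (x, y)" by fastforce
  then have "y \<in> set (jh_perm C)" using last_chain_edge_jh_perm[OF chain] e by auto
  then obtain k where k: "k < m" "jh_perm C ! k = y"
    using length_jh_perm[OF chain] by (auto simp: in_set_conv_nth)
  then have "x = ?p k"
    using pf_parent_eq[OF local_priority_forest_last_chain[OF chain]] e xy by auto
  then show "e \<in> {(?p k, jh_perm C ! k) | k. k < m}" using xy k by auto
next
  fix e assume "e \<in> {(?p k, jh_perm C ! k) | k. k < m}"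
  then show "e \<in> last C" using pf_parent_jh_perm(2) by auto
qed

lemma phi_chain_apply:
  "phi_chain n C i = (if i \<in> {1..m}
     then Some (relabel_vertex (inv_pperm n (jh_perm C)) (pf_parent (last C) (jh_perm C ! (i - 1))))
     else None)"
  unfolding phi_chain_def Let_def pf_parent_def using length_jh_perm[OF chain] by auto

lemma phi_chain_SomeD:
  assumes "phi_chain n C i = Some v"
  shows "i \<in> {1..m} \<and> v \<in> forest_vertices m n
    \<and> visit_pos (inv_pperm n (jh_perm C)) v = pf_parent (last C) (jh_perm C ! (i - 1))"
proof -
  have i: "i \<in> {1..m}"
    and v: "v = relabel_vertex (inv_pperm n (jh_perm C)) (pf_parent (last C) (jh_perm C ! (i - 1)))"
    using assms phi_chain_apply by (auto split: if_splits)
  then have "pf_parent (last C) (jh_perm C ! (i - 1)) \<le> n"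
    using pf_parent_jh_perm[of "i - 1"] by fastforce
  with i v show ?thesis using visit_pos_relabel_vertex[OF label_word_chain] by simp
qed

lemma priority_word_phi_chain: "priority_word m n (phi_chain n C) (inv_pperm n (jh_perm C))"
  unfolding priority_word_def priority_prefix_def priority_step_def
proof (intro conjI ballI allI impI)
  let ?w = "inv_pperm n (jh_perm C)"
  have word: "label_word m n ?w" by (rule label_word_chain)
  then show "length ?w = n" "\<And>i. i \<in> {1..m} \<Longrightarrow> Some i \<in> set ?w"
    unfolding label_word_def by simp_all
  fix q i assume "q < length ?w" and qi: "?w ! q = Some i"
  then have q: "q < n" by simp
  then show "i \<in> {1..m}" "Some i \<notin> set (take q ?w)" using word qi unfolding label_word_def by auto
  have i: "i - 1 < m" "Suc (i - 1) = i" "jh_perm C ! (i - 1) = Suc q"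
    using nth_inv_pperm_Some[OF jh_perm_distinct[OF chain] jh_perm_range[OF chain] q qi]
    by (auto simp: length_jh_perm[OF chain])
  obtain v where v: "phi_chain n C i = Some v" using phi_chain_apply i by auto
  define a where "a = pf_parent (last C) (jh_perm C ! (i - 1))"
  have a: "(a, jh_perm C ! (i - 1)) \<in> C ! Suc (i - 1)" "a < Suc q"
    using pf_parent_jh_perm[OF i(1)] i unfolding a_def by auto
  have v_vertex: "v \<in> forest_vertices m n" and pos_v: "visit_pos ?w v = a"
    using phi_chain_SomeD[OF v] unfolding a_def by auto
  have "v \<in> visited ?w q" using visited_iff_visit_pos_le[OF word v_vertex] a q pos_v by simp
  moreover have "\<exists>i'. ?w ! q' = Some i' \<and> i' < i" if q': "q' < q" "v \<in> visited ?w q'" for q'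
  proof -
    have "a < Suc q'" using visited_iff_visit_pos_le[OF word v_vertex] q' q pos_v by simp
    then obtain k where k: "k < i - 1" "jh_perm C ! k = Suc q'"
      using jh_perm_between_edge[OF chain i(1) a(1)] q'(1) i(3) by auto
    then have "?w ! q' = Some (Suc k)"
      using nth_inv_pperm_nth[OF jh_perm_distinct[OF chain] jh_perm_range[OF chain], of k] i
      by (simp add: length_jh_perm[OF chain])
    with k show ?thesis by auto
  qed
  ultimately show "\<exists>v. phi_chain n C i = Some v \<and> v \<in> visited ?w q
      \<and> (\<forall>q' < q. v \<in> visited ?w q' \<longrightarrow> (\<exists>i'. ?w ! q' = Some i' \<and> i' < i))"
    using v by blast
qed

lemma phi_chain_ordered_forest: "phi_chain n C \<in> ordered_forests m n"
proof -
  let ?F = "phi_chain n C" and ?w = "inv_pperm n (jh_perm C)"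
  have "dom ?F = {1..m}" using phi_chain_apply by (auto simp: dom_def)
  moreover have "ran ?F \<subseteq> Rt ` {0..n - m} \<union> Lb ` {1..m}"
    using phi_chain_SomeD unfolding ran_def forest_vertices_def by blast
  moreover have "acyclic {(Lb i, v) | i v. ?F i = Some v}"
  proof -
    have "{(Lb i, v) | i v. ?F i = Some v}\<inverse> \<subseteq> measure (visit_pos ?w)"
      using phi_chain_SomeD priority_word_parent_visit_pos(1)[OF priority_word_phi_chain] by auto
    then have "wf ({(Lb i, v) | i v. ?F i = Some v}\<inverse>)" using wf_subset wf_measure by blast
    then show ?thesis using wf_acyclic acyclic_converse by blast
  qed
  ultimately show ?thesis unfolding ordered_forests_def by simp
qed

lemma priority_traversal_phi_chain:
  "priority_traversal m n (phi_chain n C) = inv_pperm n (jh_perm C)"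
  using count_None_label_word[OF label_word_chain]
    priority_word_priority_traversal[OF phi_chain_ordered_forest]
    priority_word_phi_chain priority_word_unique
  by blast

lemma priority_forest_of_phi_chain: "priority_forest_of m n (phi_chain n C) = last C"
proof -
  let ?F = "phi_chain n C" and ?w = "inv_pperm n (jh_perm C)"
  let ?p = "\<lambda>k. pf_parent (last C) (jh_perm C ! k)"
  have "priority_forest_of m n ?F = {(visit_pos ?w v, visit_pos ?w (Lb i)) | i v. ?F i = Some v}"
    unfolding priority_forest_of_def priority_traversal_phi_chain Let_def ..
  also have "\<dots> = {(?p k, jh_perm C ! k) | k. k < m}"
  proof (intro equalityI subsetI)
    fix e assume "e \<in> {(visit_pos ?w v, visit_pos ?w (Lb i)) | i v. ?F i = Some v}"
    then obtain i v where e: "e = (visit_pos ?w v, visit_pos ?w (Lb i))" "?F i = Some v" by auto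
    then have "i \<in> {1..m}" "visit_pos ?w v = ?p (i - 1)" using phi_chain_SomeD by auto
    then have "i - 1 < m" "Suc (i - 1) = i" "visit_pos ?w v = ?p (i - 1)" by auto
    then show "e \<in> {(?p k, jh_perm C ! k) | k. k < m}"
      using e visit_pos_chain by (metis (mono_tags, lifting) mem_Collect_eq)
  next
    fix e assume "e \<in> {(?p k, jh_perm C ! k) | k. k < m}"
    then obtain k where e: "e = (?p k, jh_perm C ! k)" "k < m" by auto
    then obtain v where "?F (Suc k) = Some v" using phi_chain_apply by simp
    moreover from this have "visit_pos ?w v = ?p k" using phi_chain_SomeD by fastforce
    ultimately show "e \<in> {(visit_pos ?w v, visit_pos ?w (Lb i)) | i v. ?F i = Some v}"
      using e visit_pos_chain by (metis (mono_tags, lifting) mem_Collect_eq)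
  qed
  also have "\<dots> = last C" using last_chain_parent_edges by simp
  finally show ?thesis .
qed

end

section \<open>The chain of a forest\<close>

text \<open>For the priority traversal \<open>s\<close> of \<open>F\<close>, \<open>traversal_edges s F m\<close> is the priority forest
  of \<open>F\<close>.\<close>
definition traversal_edges :: "nat option list \<Rightarrow> oforest \<Rightarrow> nat \<Rightarrow> (nat \<times> nat) set" where
  "traversal_edges s F k = {(visit_pos s v, visit_pos s (Lb i)) | i v. F i = Some v \<and> i \<le> k}"

definition traversal_chain :: "nat option list \<Rightarrow> oforest \<Rightarrow> nat \<Rightarrow> (nat \<times> nat) set list" where
  "traversal_chain s F m = map (traversal_edges s F) [0..<Suc m]"

context
  fixes m n :: nat and F :: oforest and s :: "nat option list"
  assumes forest: "F \<in> ordered_forests m n" and word: "priority_word m n F s"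
begin

text \<open>Every vertex strictly between the two ends of an edge into label \<open>i\<close> was visited
  after the parent, so it is a smaller label by priority search.\<close>
lemma traversal_edges_has_parent:
  assumes ab: "(a, b) \<in> traversal_edges s F k" and x: "a < x" "x \<le> b"
  shows "\<exists>c. (c, x) \<in> traversal_edges s F k"
proof -
  obtain i v where e: "a = visit_pos s v" "b = visit_pos s (Lb i)" "F i = Some v" "i \<le> k"
    using ab unfolding traversal_edges_def by blast
  show ?thesis
  proof (cases "x = b")
    case True
    with ab show ?thesis by blast
  next
    case False
    with x e have xb: "visit_pos s v < x" "x < visit_pos s (Lb i)" by simp_all
    have iv: "i \<in> {1..m}" "v \<in> forest_vertices m n" using ordered_forest_SomeD[OF forest e(3)] by auto
    obtain i' where i': "s ! (x - 1) = Some i'" "i' < i"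
      using priority_word_parent_visit_pos(2)[OF word e(3) iv xb] by blast
    have "Lb i \<in> forest_vertices m n" using iv unfolding forest_vertices_def by simp
    then have "x - 1 < n" using visit_pos_le[OF label_word_if_priority_word[OF word]] xb by fastforce
    then have "i' \<in> {1..m}" "visit_pos s (Lb i') = x"
      using label_word_nth_Some[OF label_word_if_priority_word[OF word] _ i'(1)]
        visit_pos_Lb[OF label_word_if_priority_word[OF word] _ i'(1)] xb by auto
    moreover obtain v' where "F i' = Some v'" using ordered_forest_Some[OF forest] calculation(1) by blast
    ultimately have "(visit_pos s v', x) \<in> traversal_edges s F k"
      using i'(2) e(4) unfolding traversal_edges_def by fastforce
    then show ?thesis by blast
  qed
qed

lemma local_priority_forest_traversal_edges: "local_priority_forest n (traversal_edges s F k)"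
  unfolding local_priority_forest_def
proof (intro conjI allI impI)
  show "traversal_edges s F k \<subseteq> {0..n} \<times> {0..n}"
  proof
    fix e assume "e \<in> traversal_edges s F k"
    then obtain i v where e: "e = (visit_pos s v, visit_pos s (Lb i))" "F i = Some v"
      unfolding traversal_edges_def by blast
    then have "v \<in> forest_vertices m n" "Lb i \<in> forest_vertices m n"
      using ordered_forest_SomeD[OF forest] unfolding forest_vertices_def by auto
    with e(1) show "e \<in> {0..n} \<times> {0..n}" using visit_pos_le[OF label_word_if_priority_word[OF word]] by simp
  qed
  show "\<forall>(a, b) \<in> traversal_edges s F k. a < b"
  proof
    fix e assume "e \<in> traversal_edges s F k"
    then obtain i v where e: "e = (visit_pos s v, visit_pos s (Lb i))" "F i = Some v"
      unfolding traversal_edges_def by blast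
    then have "visit_pos s v < visit_pos s (Lb i)"
      using ordered_forest_SomeD[OF forest] priority_word_parent_visit_pos(1)[OF word] by blast
    with e(1) show "case e of (a, b) \<Rightarrow> a < b" by simp
  qed
  show "a = a'" if ab: "(a, b) \<in> traversal_edges s F k" "(a', b) \<in> traversal_edges s F k" for a a' b
  proof -
    obtain i v i' v' where "a = visit_pos s v" "b = visit_pos s (Lb i)" "F i = Some v"
      "a' = visit_pos s v'" "b = visit_pos s (Lb i')" "F i' = Some v'"
      using ab unfolding traversal_edges_def by blast
    moreover from this have "i = i'"
      using visit_pos_Lb_inj[OF label_word_if_priority_word[OF word]] ordered_forest_SomeD[OF forest] by metis
    ultimately show ?thesis by simp
  qed
qed (use traversal_edges_has_parent in blast)

lemma traversal_edges_0: "traversal_edges s F 0 = {}"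
proof -
  have "\<not> i \<le> 0" if "F i = Some v" for i v using ordered_forest_SomeD[OF forest that] by simp
  then show ?thesis unfolding traversal_edges_def by blast
qed

lemma traversal_edges_Suc:
  assumes "k < m"
  obtains e where "e \<notin> traversal_edges s F k" "traversal_edges s F (Suc k) = insert e (traversal_edges s F k)"
    "snd e = visit_pos s (Lb (Suc k))"
proof -
  have "Suc k \<in> {1..m}" using assms by simp
  then obtain v where v: "F (Suc k) = Some v" using ordered_forest_Some[OF forest] by blast
  let ?e = "(visit_pos s v, visit_pos s (Lb (Suc k)))"
  have "traversal_edges s F (Suc k) = insert ?e (traversal_edges s F k)"
    unfolding traversal_edges_def using v by (auto simp: le_Suc_eq)
  moreover have "?e \<notin> traversal_edges s F k"
  proof
    assume "?e \<in> traversal_edges s F k"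
    then obtain i v' where "visit_pos s (Lb (Suc k)) = visit_pos s (Lb i)" "F i = Some v'" "i \<le> k"
      unfolding traversal_edges_def by blast
    moreover from this have "i \<in> {1..m}" using ordered_forest_SomeD[OF forest] by blast
    ultimately show False
      using visit_pos_Lb_inj[OF label_word_if_priority_word[OF word], of "Suc k" i] assms by simp
  qed
  ultimately show ?thesis using that by simp
qed

lemma traversal_chain_complete: "traversal_chain s F m \<in> complete_chains n m"
  unfolding complete_chains_def traversal_chain_def
proof (intro CollectI conjI ballI allI impI)
  show "map (traversal_edges s F) [0..<Suc m] ! 0 = {}"
    using traversal_edges_0 by (simp del: upt_Suc)
  have pf: "priority_forest n (traversal_edges s F k)" for k
    using local_priority_forest_traversal_edges priority_forest_iff_local by simp
  then show "priority_forest n P" if "P \<in> set (map (traversal_edges s F) [0..<Suc m])" for P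
    using that by auto
  fix k assume "k < m"
  then obtain e where "e \<notin> traversal_edges s F k"
    "traversal_edges s F (Suc k) = insert e (traversal_edges s F k)"
    by (rule traversal_edges_Suc)
  then have "pf_cover n (traversal_edges s F k) (traversal_edges s F (Suc k))"
    by (rule pf_coverI[OF pf pf])
  with \<open>k < m\<close> show "pf_cover n (map (traversal_edges s F) [0..<Suc m] ! k)
      (map (traversal_edges s F) [0..<Suc m] ! Suc k)"
    by (simp del: upt_Suc add: nth_map)
qed simp

lemma nth_traversal_chain: "k \<le> m \<Longrightarrow> traversal_chain s F m ! k = traversal_edges s F k"
  unfolding traversal_chain_def by (simp del: upt_Suc)

lemma jh_perm_traversal_chain: "jh_perm (traversal_chain s F m) = map (\<lambda>k. visit_pos s (Lb (Suc k))) [0..<m]"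
proof (rule nth_equalityI)
  show "length (jh_perm (traversal_chain s F m)) = length (map (\<lambda>k. visit_pos s (Lb (Suc k))) [0..<m])"
    using length_jh_perm[OF traversal_chain_complete] by simp
  fix k assume "k < length (jh_perm (traversal_chain s F m))"
  then have k: "k < m" using length_jh_perm[OF traversal_chain_complete] by simp
  then obtain e where "e \<notin> traversal_edges s F k"
    "traversal_edges s F (Suc k) = insert e (traversal_edges s F k)" "snd e = visit_pos s (Lb (Suc k))"
    by (rule traversal_edges_Suc)
  then have "edge_label (traversal_edges s F k) (traversal_edges s F (Suc k)) = visit_pos s (Lb (Suc k))"
    unfolding edge_label_def by (simp add: insert_Diff_if)
  then show "jh_perm (traversal_chain s F m) ! k = map (\<lambda>k. visit_pos s (Lb (Suc k))) [0..<m] ! k"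
    using nth_jh_perm[OF traversal_chain_complete k] nth_traversal_chain k by simp
qed

lemma inv_pperm_jh_perm_traversal_chain: "inv_pperm n (jh_perm (traversal_chain s F m)) = s"
proof (rule nth_equalityI)
  let ?C = "traversal_chain s F m"
  show "length (inv_pperm n (jh_perm ?C)) = length s"
    using length_label_word[OF label_word_if_priority_word[OF word]] by simp
  fix x assume "x < length (inv_pperm n (jh_perm ?C))"
  then have x: "x < n" by simp
  note distinct = jh_perm_distinct[OF traversal_chain_complete]
    and range = jh_perm_range[OF traversal_chain_complete]
  show "inv_pperm n (jh_perm ?C) ! x = s ! x"
  proof (cases "s ! x")
    case None
    have "jh_perm ?C ! k \<noteq> Suc x" if k: "k < m" for k
    proof -
      obtain q where q: "q < n" "s ! q = Some (Suc k)"
        using label_word_exists_nth[OF label_word_if_priority_word[OF word], of "Suc k"] k by auto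
      then have "jh_perm ?C ! k = Suc q"
        using jh_perm_traversal_chain visit_pos_Lb[OF label_word_if_priority_word[OF word]] k by simp
      with q None show ?thesis by auto
    qed
    then have "Suc x \<notin> set (jh_perm ?C)"
      using length_jh_perm[OF traversal_chain_complete] by (auto simp: in_set_conv_nth)
    with None show ?thesis unfolding inv_pperm_def using x by (simp del: upt_Suc)
  next
    case (Some i)
    then have "i \<in> {1..m}" "visit_pos s (Lb i) = Suc x"
      using label_word_nth_Some[OF label_word_if_priority_word[OF word] x] visit_pos_Lb[OF label_word_if_priority_word[OF word] x]
      by auto
    then have "jh_perm ?C ! (i - 1) = Suc x" "i - 1 < length (jh_perm ?C)"
      using jh_perm_traversal_chain length_jh_perm[OF traversal_chain_complete] by auto
    with nth_inv_pperm_nth[OF distinct range] Some \<open>i \<in> {1..m}\<close> show ?thesis by fastforce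
  qed
qed

end

lemma last_traversal_chain:
  assumes "F \<in> ordered_forests m n" "m \<le> n"
  shows "last (traversal_chain (priority_traversal m n F) F m) = priority_forest_of m n F"
proof -
  let ?s = "priority_traversal m n F"
  have word: "priority_word m n F ?s" using priority_word_priority_traversal assms by blast
  have "last (traversal_chain ?s F m) = traversal_edges ?s F m"
    using last_chain[OF traversal_chain_complete[OF assms(1) word]] nth_traversal_chain[OF assms(1) word]
    by simp
  also have "\<dots> = priority_forest_of m n F"
    using ordered_forest_SomeD[OF assms(1)]
    unfolding traversal_edges_def priority_forest_of_def Let_def by fastforce
  finally show ?thesis .
qed

lemma phi_chain_traversal_chain:
  assumes "F \<in> ordered_forests m n" "m \<le> n"
  shows "phi_chain n (traversal_chain (priority_traversal m n F) F m) = F"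
proof
  fix i
  let ?s = "priority_traversal m n F"
  let ?C = "traversal_chain ?s F m"
  have word: "priority_word m n F ?s" using priority_word_priority_traversal assms by blast
  note chain = traversal_chain_complete[OF assms(1) word]
  show "phi_chain n ?C i = F i"
  proof (cases "i \<in> {1..m}")
    case False
    then show ?thesis using phi_chain_apply[OF chain] ordered_forest_SomeD[OF assms(1)]
      by (metis not_Some_eq)
  next
    case True
    obtain v where v: "F i = Some v" using ordered_forest_Some[OF assms(1) True] by blast
    from True have "i - 1 < m" "Suc (i - 1) = i" by auto
    then have "jh_perm ?C ! (i - 1) = visit_pos ?s (Lb i)"
      using jh_perm_traversal_chain[OF assms(1) word] by simp
    moreover have "(visit_pos ?s v, visit_pos ?s (Lb i)) \<in> last ?C"
      using last_traversal_chain[OF assms] v unfolding priority_forest_of_def Let_def by blast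
    ultimately have "pf_parent (last ?C) (jh_perm ?C ! (i - 1)) = visit_pos ?s v"
      using pf_parent_eq[OF local_priority_forest_last_chain[OF chain]] by simp
    moreover have "relabel_vertex ?s (visit_pos ?s v) = v"
      using relabel_vertex_visit_pos[OF label_word_if_priority_word[OF word]]
        ordered_forest_SomeD[OF assms(1) v] by blast
    ultimately show ?thesis
      using phi_chain_apply[OF chain] True v inv_pperm_jh_perm_traversal_chain[OF assms(1) word] by simp
  qed
qed

lemma inj_on_phi_chain: "inj_on (phi_chain n) (complete_chains n m)"
proof (rule inj_onI)
  fix C C' assume C: "C \<in> complete_chains n m" and C': "C' \<in> complete_chains n m"
    and eq: "phi_chain n C = phi_chain n C'"
  show "C = C'"
  proof (rule complete_chains_eqI[OF C C'])
    show "last C = last C'"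
      using priority_forest_of_phi_chain[OF C] priority_forest_of_phi_chain[OF C'] eq by simp
    show "inv_pperm n (jh_perm C) = inv_pperm n (jh_perm C')"
      using priority_traversal_phi_chain[OF C] priority_traversal_phi_chain[OF C'] eq by simp
  qed
qed

lemma phi_chain_image:
  assumes "m \<le> n"
  shows "phi_chain n ` complete_chains n m = ordered_forests m n"
proof
  show "phi_chain n ` complete_chains n m \<subseteq> ordered_forests m n"
    using phi_chain_ordered_forest by blast
  show "ordered_forests m n \<subseteq> phi_chain n ` complete_chains n m"
    using phi_chain_traversal_chain[OF _ assms] traversal_chain_complete
      priority_word_priority_traversal[OF _ assms] by (metis image_eqI subsetI)
qed

lemma ordered_forest_eq_phi_chain:
  assumes mn: "m \<le> n" and C: "C \<in> complete_chains n m" and G: "G \<in> ordered_forests m n"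
    and "priority_forest_of m n G = last C"
    and "priority_traversal m n G = inv_pperm n (jh_perm C)"
  shows "G = phi_chain n C"
proof -
  let ?s = "priority_traversal m n G"
  have word: "priority_word m n G ?s" using priority_word_priority_traversal[OF G mn] .
  have "traversal_chain ?s G m = C"
  proof (rule complete_chains_eqI[OF traversal_chain_complete[OF G word] C])
    show "last (traversal_chain ?s G m) = last C"
      using last_traversal_chain[OF G mn] assms(4) by simp
    show "inv_pperm n (jh_perm (traversal_chain ?s G m)) = inv_pperm n (jh_perm C)"
      using inv_pperm_jh_perm_traversal_chain[OF G word] assms(5) by simp
  qed
  then show ?thesis using phi_chain_traversal_chain[OF G mn] by simp
qed

theorem theorem3p4:
  fixes m n :: nat
  assumes "m \<le> n"
  shows "bij_betw (phi_chain n) (complete_chains n m) (ordered_forests m n)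
    \<and> (\<forall>C \<in> complete_chains n m.
          priority_forest_of m n (phi_chain n C) = last C
        \<and> priority_traversal m n (phi_chain n C) = inv_pperm n (jh_perm C))
    \<and> (\<forall>\<psi>. bij_betw \<psi> (complete_chains n m) (ordered_forests m n)
          \<and> (\<forall>C \<in> complete_chains n m.
                priority_forest_of m n (\<psi> C) = last C
              \<and> priority_traversal m n (\<psi> C) = inv_pperm n (jh_perm C))
          \<longrightarrow> (\<forall>C \<in> complete_chains n m. \<psi> C = phi_chain n C))"
proof (intro conjI allI impI ballI)
  show "bij_betw (phi_chain n) (complete_chains n m) (ordered_forests m n)"
    using inj_on_phi_chain phi_chain_image[OF assms] unfolding bij_betw_def by blast
next
  fix C assume "C \<in> complete_chains n m"
  then show "priority_forest_of m n (phi_chain n C) = last C"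
    and "priority_traversal m n (phi_chain n C) = inv_pperm n (jh_perm C)"
    by (rule priority_forest_of_phi_chain, rule priority_traversal_phi_chain)
next
  fix \<psi> C
  assume \<psi>: "bij_betw \<psi> (complete_chains n m) (ordered_forests m n)
      \<and> (\<forall>C \<in> complete_chains n m. priority_forest_of m n (\<psi> C) = last C
          \<and> priority_traversal m n (\<psi> C) = inv_pperm n (jh_perm C))"
    and C: "C \<in> complete_chains n m"
  then have "\<psi> C \<in> ordered_forests m n" using bij_betwE by blast
  with \<psi> C show "\<psi> C = phi_chain n C" using ordered_forest_eq_phi_chain[OF assms] by blast
qed

end
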